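(* Let $\bm v_1,\dots,\bm v_N\in\mathbb{R}^r$, $\bm X := \mathsf{Gram}(\bm v_1,\dots,\bm v_N)$, and $\bm v := (\bm v_1;\dots;\bm v_N)\in\mathbb{R}^{rN}$. Then $\bm X\in\mathscr{C}^N$ if and only if $\sum_{i=1}^N\|\bm v_i\|_2^2 = N$ and there exists $\bm M\in\mathcal{B}_{\mathrm{sep}}(N,r)$ with $\bm v^\top\bm M\bm v = N^2$.
   Context: $\mathscr{C}^N := \mathrm{conv}\{\bm x\bm x^\top : \bm x\in\{\pm1\}^N\}$. A matrix $\bm M \in \mathbb{R}^{rN\times rN}$ is viewed as an $N\times N$ array of $r\times r$ blocks, $\bm M_{[ij]}$ denoting block $(i,j)$. $\mathcal{B}(N,r)$ is the set of symmetric $\bm M \in \mathbb{R}^{rN\times rN}$ with $\bm M \succeq 0$, $\bm M_{[ii]} = \bm I_r$ for all $i$, and $\bm M_{[ij]} = \bm M_{[ij]}^\top$ for all $i,j$. A matrix $\bm\rho\in\mathbb{R}^{rN\times rN}$ with trace $1$ is separable if $\bm\rho = \sum_{k=1}^m \rho_k(\bm a_k\otimes\bm b_k)(\bm a_k\otimes\bm b_k)^\top$ for some unit vectors $\bm a_k\in\mathbb{R}^N$, unit vectors $\bm b_k\in\mathbb{R}^r$, and $\rho_k\ge0$ with $\sum_k\rho_k = 1$ (here $\bm a\otimes\bm b\in\mathbb{R}^{rN}$ has $i$-th block $a_i\bm b$). $\mathcal{B}_{\mathrm{sep}}(N,r)$ is the set of $\bm M\in\mathcal{B}(N,r)$ such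 that $\frac{1}{rN}\bm M$ is separable. *)

theory Defs
  imports "HOL-Analysis.Analysis"
begin

text \<open>Index conventions: the index set [N] is a finite type 'n (N = CARD('n)),
  the index set [r] is a finite type 'r (r = CARD('r)); R^{rN} is indexed by
  pairs (i,a) :: 'n \<times> 'r, so that entry ((i,a),(j,b)) of an rN x rN matrix
  is entry (a,b) of its block (i,j).\<close>

definition outer :: "real^'k \<Rightarrow> real^'k^'k" where
  "outer x = (\<chi> i j. x$i * x$j)"

definition gram :: "('n \<Rightarrow> real^'r) \<Rightarrow> real^'n^'n" where
  "gram v = (\<chi> i j. v i \<bullet> v j)"

definition stack :: "('n::finite \<Rightarrow> real^'r::finite) \<Rightarrow> real^('n \<times> 'r)" where
  "stack v = (\<chi> p. v (fst p) $ snd p)"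

definition cut_polytope :: "(real^'n^'n) set" where
  "cut_polytope = convex hull {outer x | x :: real^'n. \<forall>i. x$i = 1 \<or> x$i = -1}"

definition psd :: "real^'k^'k \<Rightarrow> bool" where
  "psd M \<longleftrightarrow> (\<forall>x. 0 \<le> x \<bullet> (M *v x))"

definition block :: "real^('n::finite \<times> 'r::finite)^('n \<times> 'r) \<Rightarrow> 'n \<Rightarrow> 'n \<Rightarrow> real^'r^'r" where
  "block M i j = (\<chi> a b. M $ (i,a) $ (j,b))"

definition B_set :: "(real^('n::finite \<times> 'r::finite)^('n \<times> 'r)) set" where
  "B_set = {M. transpose M = M \<and> psd M \<and> (\<forall>i. block M i i = mat 1)
              \<and> (\<forall>i j. block M i j = transpose (block M i j))}"

definition kron :: "real^'n::finite \<Rightarrow> real^'r::finite \<Rightarrow> real^('n \<times> 'r)" where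
  "kron a b = (\<chi> p. a $ fst p * b $ snd p)"

definition separable :: "real^('n::finite \<times> 'r::finite)^('n \<times> 'r) \<Rightarrow> bool" where
  "separable \<rho> \<longleftrightarrow> trace \<rho> = 1 \<and>
     (\<exists>(m::nat) (c::nat \<Rightarrow> real) (a::nat \<Rightarrow> real^'n) (b::nat \<Rightarrow> real^'r).
        (\<forall>k<m. norm (a k) = 1 \<and> norm (b k) = 1 \<and> 0 \<le> c k) \<and>
        (\<Sum>k<m. c k) = 1 \<and>
        \<rho> = (\<Sum>k<m. c k *\<^sub>R outer (kron (a k) (b k))))"

definition B_sep :: "(real^('n::finite \<times> 'r::finite)^('n \<times> 'r)) set" where
  "B_sep = {M \<in> B_set. separable ((1 / (real CARD('r) * real CARD('n))) *\<^sub>R M)}"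

end

theory Submission
  imports Defs
begin

text \<open>Write the cut polytope condition as gram v = sum_k w_k s_k s_k^T with sign vectors s_k.
  Then the v_i are unit vectors, and the factorisation gram v = sum_k p_k p_k^T with
  p_k = sqrt w_k s_k is realised in R^r: there are q_k with q_k . v_i = p_k(i) which, together
  with an orthonormal basis of the orthogonal complement of span {v_i}, form a Parseval frame.
  The matrix M = sum_k (s_k (x) q_k)(s_k (x) q_k)^T + sum_e (1 (x) e)(1 (x) e)^T then has identity
  diagonal blocks, is separable, and v^T M v = sum_k (N sqrt w_k)^2 = N^2.

  Conversely, for separable M = sum_k d_k (a_k a_k^T) (x) (b_k b_k^T) with identity diagonal
  blocks, v^T M v is at most N sum_i |v_i|^2 by Cauchy-Schwarz; equality forces
  a_k(i) (b_k . v_i) to be independent of i, which makes every v_i a unit vector and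
  exhibits gram v as a convex combination of s s^T with s_k(i) the sign of b_k . v_i.\<close>

definition sign_vector :: "real^'n \<Rightarrow> bool" where
  "sign_vector x \<longleftrightarrow> (\<forall>i. x$i = 1 \<or> x$i = -1)"

definition parseval_frame :: "'j set \<Rightarrow> ('j \<Rightarrow> 'a::real_inner) \<Rightarrow> bool" where
  "parseval_frame J f \<longleftrightarrow> (\<forall>x y. (\<Sum>j\<in>J. (f j \<bullet> x) * (f j \<bullet> y)) = x \<bullet> y)"

lemma sign_vector_square: "sign_vector x \<Longrightarrow> (x$i)^2 = 1"
  unfolding sign_vector_def by (metis power2_minus power_one)

lemma cut_polytope_sign_vectors: "cut_polytope = convex hull (outer ` Collect sign_vector)"
  unfolding cut_polytope_def sign_vector_def by (simp add: image_def Bex_def conj_commute)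

lemma cut_polytopeE:
  assumes "X \<in> cut_polytope"
  obtains K :: "nat set" and w s where "finite K" "\<And>k. k \<in> K \<Longrightarrow> 0 \<le> w k \<and> sign_vector (s k)"
    "sum w K = 1" "X = (\<Sum>k\<in>K. w k *\<^sub>R outer (s k))"
proof -
  obtain m :: nat and w P where P: "\<forall>k\<in>{1..m}. 0 \<le> w k \<and> P k \<in> outer ` Collect sign_vector"
    and w1: "sum w {1..m} = 1" and X: "(\<Sum>k = 1..m. w k *\<^sub>R P k) = X"
    using assms unfolding cut_polytope_sign_vectors convex_hull_indexed by blast
  define s where "s k = (SOME x. sign_vector x \<and> P k = outer x)" for k
  have s: "sign_vector (s k) \<and> P k = outer (s k)" if "k \<in> {1..m}" for k
  proof -
    have "\<exists>x. sign_vector x \<and> P k = outer x" using P that by blast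
    then show ?thesis unfolding s_def by (rule someI_ex)
  qed
  show ?thesis
  proof (rule that[of "{1..m}" w s])
    show "X = (\<Sum>k\<in>{1..m}. w k *\<^sub>R outer (s k))"
      unfolding X[symmetric] using s by (auto intro: sum.cong)
  qed (use P s w1 in auto)
qed

lemma sum_outer_sign_vectors_in_cut_polytope:
  assumes "finite K" "\<And>k. k \<in> K \<Longrightarrow> 0 \<le> w k \<and> sign_vector (s k)" "sum w K = 1"
  shows "(\<Sum>k\<in>K. w k *\<^sub>R outer (s k)) \<in> cut_polytope"
  unfolding cut_polytope_sign_vectors
  using assms by (intro convex_sum) (auto intro: hull_inc)

lemma outer_scaleR: "outer (c *\<^sub>R x) = (c * c) *\<^sub>R outer x"
  by (simp add: vec_eq_iff outer_def)

lemma sum_outer_component: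
  "(\<Sum>k\<in>K. c k *\<^sub>R outer (w k)) $ p $ q = (\<Sum>k\<in>K. c k * (w k $ p * w k $ q))"
  by (simp add: outer_def)

lemma inner_sum_outer_mult:
  fixes w :: "'k \<Rightarrow> real^'m"
  shows "x \<bullet> ((\<Sum>k\<in>K. c k *\<^sub>R outer (w k)) *v y) = (\<Sum>k\<in>K. c k * ((w k \<bullet> x) * (w k \<bullet> y)))"
proof -
  have "x \<bullet> ((\<Sum>k\<in>K. c k *\<^sub>R outer (w k)) *v y)
      = (\<Sum>p\<in>UNIV. \<Sum>q\<in>UNIV. \<Sum>k\<in>K. c k * ((w k $ p * x $ p) * (w k $ q * y $ q)))"
    unfolding inner_vec_def matrix_vector_mult_def sum_outer_component
    by (simp add: sum_distrib_left sum_distrib_right mult_ac)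
  also have "\<dots> = (\<Sum>k\<in>K. \<Sum>p\<in>UNIV. \<Sum>q\<in>UNIV. c k * ((w k $ p * x $ p) * (w k $ q * y $ q)))"
    by (subst sum.swap, rule sum.cong[OF refl], rule sum.swap)
  also have "\<dots> = (\<Sum>k\<in>K. c k * ((w k \<bullet> x) * (w k \<bullet> y)))"
    by (rule sum.cong[OF refl])
      (simp only: inner_vec_def inner_real_def sum_product, simp only: sum_distrib_left)
  finally show ?thesis .
qed

lemma trace_sum_outer: "trace (\<Sum>k\<in>K. c k *\<^sub>R outer (w k)) = (\<Sum>k\<in>K. c k * (w k \<bullet> w k))"
  unfolding trace_def sum_outer_component inner_vec_def
  by (subst sum.swap) (simp add: sum_distrib_left)

lemma cut_polytope_diagonal: "X \<in> cut_polytope \<Longrightarrow> X $ i $ i = 1"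
proof (elim cut_polytopeE)
  fix K :: "nat set" and w s
  assume K: "finite K" and ws: "\<And>k. k \<in> K \<Longrightarrow> 0 \<le> w k \<and> sign_vector (s k)"
    and "sum w K = 1" and X: "X = (\<Sum>k\<in>K. w k *\<^sub>R outer (s k))"
  have "X $ i $ i = (\<Sum>k\<in>K. w k)"
    unfolding X sum_outer_component using ws
    by (intro sum.cong) (auto simp: sign_vector_square simp flip: power2_eq_square)
  then show ?thesis using \<open>sum w K = 1\<close> by simp
qed

lemma sum_UNIV_prod: "(\<Sum>p\<in>(UNIV::('a::finite \<times> 'b::finite) set). f p) = (\<Sum>i\<in>UNIV. \<Sum>a\<in>UNIV. f (i,a))"
  unfolding sum.cartesian_product UNIV_Times_UNIV by simp

lemma inner_kron_stack: "kron a b \<bullet> stack v = (\<Sum>i\<in>UNIV. a $ i * (b \<bullet> v i))"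
  unfolding inner_vec_def sum_UNIV_prod
  by (simp add: kron_def stack_def sum_distrib_left mult.assoc)

lemma inner_kron_kron: "kron a b \<bullet> kron a' b' = (a \<bullet> a') * (b \<bullet> b')"
  unfolding inner_vec_def sum_UNIV_prod by (simp add: kron_def sum_product mult_ac)

lemma kron_scaleR: "kron (c *\<^sub>R a) (e *\<^sub>R b) = (c * e) *\<^sub>R kron a b"
  by (simp add: vec_eq_iff kron_def)

lemma block_sum_outer_kron:
  "block (\<Sum>k\<in>K. c k *\<^sub>R outer (kron (a k) (b k))) i j
     = (\<Sum>k\<in>K. (c k * (a k $ i * a k $ j)) *\<^sub>R outer (b k))"
  unfolding vec_eq_iff block_def outer_def kron_def
  by (auto intro!: sum.cong simp: mult_ac)

lemma quadratic_form_sum_outer_kron: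
  "stack v \<bullet> ((\<Sum>k\<in>K. c k *\<^sub>R outer (kron (a k) (b k))) *v stack v)
     = (\<Sum>k\<in>K. c k * (\<Sum>i\<in>UNIV. a k $ i * (b k \<bullet> v i))^2)"
  unfolding inner_sum_outer_mult inner_kron_stack by (simp add: power2_eq_square)

lemma trace_identity_blocks:
  fixes M :: "real^('n::finite \<times> 'r::finite)^('n \<times> 'r)"
  assumes "\<And>i. block M i i = mat 1"
  shows "trace M = real CARD('r) * real CARD('n)"
proof -
  have "trace M = (\<Sum>i\<in>UNIV. \<Sum>a\<in>UNIV. block M i i $ a $ a)"
    unfolding trace_def sum_UNIV_prod block_def by simp
  also have "\<dots> = (\<Sum>i\<in>(UNIV::'n set). real CARD('r))"
    using assms by (simp add: mat_def)
  finally show ?thesis by simp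
qed

lemma norm_scaleR_sgn: "norm x *\<^sub>R sgn x = x"
  by (cases "x = 0") (simp_all add: sgn_div_norm)

lemma separableI:
  fixes a :: "'k \<Rightarrow> real^'n::finite" and b :: "'k \<Rightarrow> real^'r::finite"
  assumes fin: "finite K"
    and unit: "\<And>k. k \<in> K \<Longrightarrow> norm (a k) = 1 \<and> norm (b k) = 1 \<and> 0 \<le> c k"
    and c1: "sum c K = 1"
  shows "separable (\<Sum>k\<in>K. c k *\<^sub>R outer (kron (a k) (b k)))"
proof -
  have tr: "trace (\<Sum>k\<in>K. c k *\<^sub>R outer (kron (a k) (b k))) = 1"
    unfolding trace_sum_outer inner_kron_kron using c1 unit by (simp add: norm_eq_1)
  obtain h where h: "bij_betw h {..<card K} K"
    using ex_bij_betw_nat_finite[OF fin] by (auto simp: atLeast0LessThan)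
  then have "\<forall>k<card K. norm (a (h k)) = 1 \<and> norm (b (h k)) = 1 \<and> 0 \<le> c (h k)"
    using unit by (auto simp: bij_betw_def)
  moreover have "(\<Sum>k<card K. c (h k)) = 1"
    using sum.reindex_bij_betw[OF h, of c] c1 by simp
  moreover have "(\<Sum>k\<in>K. c k *\<^sub>R outer (kron (a k) (b k)))
      = (\<Sum>k<card K. c (h k) *\<^sub>R outer (kron (a (h k)) (b (h k))))"
    using sum.reindex_bij_betw[OF h, of "\<lambda>k. c k *\<^sub>R outer (kron (a k) (b k))"] by simp
  ultimately show ?thesis
    unfolding separable_def using tr
    by (intro conjI exI[of _ "card K"] exI[of _ "c \<circ> h"] exI[of _ "a \<circ> h"] exI[of _ "b \<circ> h"]) auto
qed

lemma separable_sum_outer_kron: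
  fixes a :: "'k \<Rightarrow> real^'n::finite" and b :: "'k \<Rightarrow> real^'r::finite"
  assumes fin: "finite K" and c: "\<And>k. k \<in> K \<Longrightarrow> 0 \<le> c k"
    and tr: "trace (\<Sum>k\<in>K. c k *\<^sub>R outer (kron (a k) (b k))) = 1"
  shows "separable (\<Sum>k\<in>K. c k *\<^sub>R outer (kron (a k) (b k)))"
proof -
  define c' where "c' k = c k * (norm (a k) * norm (b k))^2" for k
  define K' where "K' = {k\<in>K. a k \<noteq> 0 \<and> b k \<noteq> 0}"
  have summand: "c k *\<^sub>R outer (kron (a k) (b k)) = c' k *\<^sub>R outer (kron (sgn (a k)) (sgn (b k)))" for k
  proof -
    have "kron (a k) (b k) = (norm (a k) * norm (b k)) *\<^sub>R kron (sgn (a k)) (sgn (b k))"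
      by (simp only: norm_scaleR_sgn flip: kron_scaleR)
    then show ?thesis by (simp add: c'_def outer_scaleR power2_eq_square)
  qed
  have zero: "c' k = 0" if "k \<in> K - K'" for k
    using that by (auto simp: c'_def K'_def)
  have "(\<Sum>k\<in>K. c k *\<^sub>R outer (kron (a k) (b k))) = (\<Sum>k\<in>K'. c' k *\<^sub>R outer (kron (sgn (a k)) (sgn (b k))))"
    unfolding summand using fin zero by (intro sum.mono_neutral_right) (auto simp: K'_def)
  moreover have "sum c' K' = 1"
  proof -
    have "sum c' K' = sum c' K"
      using fin zero by (intro sum.mono_neutral_left) (auto simp: K'_def)
    also have "\<dots> = 1"
      using tr unfolding trace_sum_outer inner_kron_kron
      by (simp add: c'_def power_mult_distrib power2_norm_eq_inner)
    finally show ?thesis .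
  qed
  moreover have "separable (\<Sum>k\<in>K'. c' k *\<^sub>R outer (kron (sgn (a k)) (sgn (b k))))"
    using fin c \<open>sum c' K' = 1\<close>
    by (intro separableI) (auto simp: K'_def c'_def norm_sgn)
  ultimately show ?thesis by simp
qed

lemma sum_outer_kron_in_B_sep:
  fixes a :: "'k \<Rightarrow> real^'n::finite" and b :: "'k \<Rightarrow> real^'r::finite"
  assumes fin: "finite K" and c: "\<And>k. k \<in> K \<Longrightarrow> 0 \<le> c k"
    and M: "M = (\<Sum>k\<in>K. c k *\<^sub>R outer (kron (a k) (b k)))"
    and diag: "\<And>i. block M i i = mat 1"
  shows "M \<in> B_sep"
proof -
  have "transpose M = M"
    by (simp add: M vec_eq_iff transpose_def outer_def mult.commute)
  moreover have "psd M"
    unfolding psd_def M inner_sum_outer_mult using c by (auto intro!: sum_nonneg)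
  moreover have "\<forall>i j. block M i j = transpose (block M i j)"
    unfolding M block_sum_outer_kron by (simp add: vec_eq_iff transpose_def outer_def mult.commute)
  moreover
  define s where "s = real CARD('r) * real CARD('n)"
  have "s > 0" by (simp add: s_def)
  have "(1 / s) *\<^sub>R M = (\<Sum>k\<in>K. (c k / s) *\<^sub>R outer (kron (a k) (b k)))"
    by (simp add: M scaleR_sum_right)
  moreover have "separable (\<Sum>k\<in>K. (c k / s) *\<^sub>R outer (kron (a k) (b k)))"
  proof (rule separable_sum_outer_kron[OF fin])
    show "0 \<le> c k / s" if "k \<in> K" for k
      using c[OF that] \<open>s > 0\<close> by simp
    show "trace (\<Sum>k\<in>K. (c k / s) *\<^sub>R outer (kron (a k) (b k))) = 1"
      using trace_identity_blocks[OF diag] \<open>s > 0\<close>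
      by (simp add: M trace_sum_outer s_def sum_divide_distrib[symmetric])
  qed
  ultimately show ?thesis
    using diag by (simp add: B_sep_def B_set_def s_def)
qed

lemma B_sepE:
  fixes M :: "real^('n::finite \<times> 'r::finite)^('n \<times> 'r)"
  assumes "M \<in> B_sep"
  obtains m c and a :: "nat \<Rightarrow> real^'n" and b :: "nat \<Rightarrow> real^'r"
  where "\<And>k. k < m \<Longrightarrow> 0 \<le> c k" "\<And>i. block M i i = mat 1"
    and "M = (\<Sum>k<m. c k *\<^sub>R outer (kron (a k) (b k)))"
proof -
  define s where "s = real CARD('r) * real CARD('n)"
  have "s > 0" by (simp add: s_def)
  have "separable ((1 / s) *\<^sub>R M)"
    using assms by (simp add: B_sep_def s_def)
  then obtain m :: nat and c a b where c: "\<forall>k<m. 0 \<le> c k"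
    and \<rho>: "(1 / s) *\<^sub>R M = (\<Sum>k<m. c k *\<^sub>R outer (kron (a k :: real^'n) (b k :: real^'r)))"
    unfolding separable_def by blast
  have "M = s *\<^sub>R ((1 / s) *\<^sub>R M)" using \<open>s > 0\<close> by simp
  also have "\<dots> = (\<Sum>k<m. (s * c k) *\<^sub>R outer (kron (a k) (b k)))"
    unfolding \<rho> scaleR_sum_right by simp
  finally show ?thesis
    using that[of m "\<lambda>k. s * c k" a b] assms c \<open>s > 0\<close> by (simp add: B_sep_def B_set_def)
qed

lemma parseval_frame_sum_outer:
  fixes f :: "'j \<Rightarrow> real^'r"
  assumes "parseval_frame J f"
  shows "(\<Sum>j\<in>J. outer (f j)) = mat 1"
proof -
  have "(\<Sum>j\<in>J. outer (f j)) $ a $ b = mat 1 $ a $ b" for a b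
  proof -
    have "(\<Sum>j\<in>J. outer (f j)) $ a $ b = (\<Sum>j\<in>J. (f j \<bullet> axis a 1) * (f j \<bullet> axis b 1))"
      by (simp add: sum_component outer_def inner_axis)
    also have "\<dots> = axis a 1 \<bullet> axis b (1::real)"
      using assms unfolding parseval_frame_def by blast
    finally show ?thesis by (simp add: inner_axis_axis mat_def)
  qed
  then show ?thesis by (simp add: vec_eq_iff)
qed

lemma sum_outer_kron_parseval_frame_in_B_sep:
  fixes a :: "'j \<Rightarrow> real^'n::finite" and f :: "'j \<Rightarrow> real^'r::finite"
  assumes J: "finite J" and a: "\<And>j. j \<in> J \<Longrightarrow> sign_vector (a j)" and frame: "parseval_frame J f"
  shows "(\<Sum>j\<in>J. outer (kron (a j) (f j))) \<in> B_sep"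
proof (rule sum_outer_kron_in_B_sep[OF J, where c = "\<lambda>_. 1"])
  show "block (\<Sum>j\<in>J. outer (kron (a j) (f j))) i i = mat 1" for i
  proof -
    have "block (\<Sum>j\<in>J. 1 *\<^sub>R outer (kron (a j) (f j))) i i = (\<Sum>j\<in>J. outer (f j))"
      unfolding block_sum_outer_kron using a
      by (intro sum.cong) (auto simp: sign_vector_square simp flip: power2_eq_square)
    then show ?thesis using parseval_frame_sum_outer[OF frame] by simp
  qed
qed simp_all

lemma orthonormal_basis_expansion:
  fixes z :: "'a::euclidean_space"
  assumes fin: "finite B" and orth: "pairwise orthogonal B" and unit: "\<And>e. e \<in> B \<Longrightarrow> norm e = 1"
    and z: "z \<in> span B"
  shows "z = (\<Sum>e\<in>B. (e \<bullet> z) *\<^sub>R e)"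
proof -
  obtain c where zc: "z = (\<Sum>b\<in>B. c b *\<^sub>R b)" using z span_finite[OF fin] by auto
  have orthonormal: "e \<bullet> b = (if e = b then 1 else 0)" if "e \<in> B" "b \<in> B" for e b
    using orth unit that norm_eq_1 by (auto simp: orthogonal_def pairwise_def)
  have "e \<bullet> z = c e" if "e \<in> B" for e
  proof -
    have "e \<bullet> z = (\<Sum>b\<in>B. c b * (e \<bullet> b))" by (simp add: zc inner_sum_right)
    also have "\<dots> = (\<Sum>b\<in>B. if b = e then c b else 0)"
      using orthonormal that by (intro sum.cong) auto
    finally show ?thesis using fin that by simp
  qed
  then show ?thesis unfolding zc by (intro sum.cong) auto
qed

lemma parseval_frame_completion:
  fixes q :: "'k \<Rightarrow> 'a::euclidean_space"
  assumes W: "subspace W" and fin: "finite K" and q: "\<And>k. k \<in> K \<Longrightarrow> q k \<in> W"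
    and tight: "\<And>w w'. w \<in> W \<Longrightarrow> w' \<in> W \<Longrightarrow> (\<Sum>k\<in>K. (q k \<bullet> w) * (q k \<bullet> w')) = w \<bullet> w'"
  obtains B where "finite B" "B \<subseteq> W\<^sup>\<bottom>" "parseval_frame (K <+> B) (case_sum q id)"
proof -
  obtain B where B: "B \<subseteq> W\<^sup>\<bottom>" "pairwise orthogonal B" "\<And>e. e \<in> B \<Longrightarrow> norm e = 1"
    "independent B" "span B = W\<^sup>\<bottom>"
    using orthonormal_basis_subspace[OF subspace_orthogonal_comp] by metis
  have finB: "finite B" using B(4) by (rule independent_imp_finite)
  have perp: "w \<bullet> z = 0" if "w \<in> W" "z \<in> W\<^sup>\<bottom>" for w z
    using that by (auto simp: orthogonal_comp_def orthogonal_def)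
  have split: "\<exists>x1 x2. x = x1 + x2 \<and> x1 \<in> W \<and> x2 \<in> W\<^sup>\<bottom>" for x
    using subspace_sum_orthogonal_comp[OF W] set_plus_elim by (metis UNIV_I)
  have "parseval_frame (K <+> B) (case_sum q id)"
    unfolding parseval_frame_def
  proof (intro allI)
    fix x y
    obtain x1 x2 where x: "x = x1 + x2" "x1 \<in> W" "x2 \<in> W\<^sup>\<bottom>" using split by blast
    obtain y1 y2 where y: "y = y1 + y2" "y1 \<in> W" "y2 \<in> W\<^sup>\<bottom>" using split by blast
    have "(\<Sum>k\<in>K. (q k \<bullet> x) * (q k \<bullet> y)) = x1 \<bullet> y1"
      using q x y perp by (simp add: inner_add_right tight)
    moreover have "(\<Sum>e\<in>B. (e \<bullet> x) * (e \<bullet> y)) = x2 \<bullet> y2"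
    proof -
      have "(\<Sum>e\<in>B. (e \<bullet> x) * (e \<bullet> y)) = (\<Sum>e\<in>B. (e \<bullet> x2) * (e \<bullet> y2))"
        using B(1) x y perp[of x1] perp[of y1] by (intro sum.cong) (auto simp: inner_add_right inner_commute)
      also have "\<dots> = (\<Sum>e\<in>B. (e \<bullet> x2) *\<^sub>R e) \<bullet> y2"
        by (simp add: inner_sum_left)
      also have "\<dots> = x2 \<bullet> y2"
        using orthonormal_basis_expansion[OF finB B(2,3), of x2] x(3) B(5) by simp
      finally show ?thesis .
    qed
    moreover have "x \<bullet> y = x1 \<bullet> y1 + x2 \<bullet> y2"
      using x y perp[of x1 y2] perp[of y1 x2] by (simp add: inner_add_left inner_add_right inner_commute)
    ultimately show "(\<Sum>j\<in>K <+> B. (case_sum q id j \<bullet> x) * (case_sum q id j \<bullet> y)) = x \<bullet> y"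
      by (simp add: sum.Plus[OF fin finB])
  qed
  with finB B(1) show ?thesis by (rule that)
qed

lemma exists_range_representer:
  fixes T :: "'a::euclidean_space \<Rightarrow> 'b::euclidean_space"
  assumes lin: "linear T" and ker: "\<And>g. T g = 0 \<Longrightarrow> p \<bullet> g = 0"
  obtains q where "q \<in> range T" "\<And>g. T g \<bullet> q = p \<bullet> g"
proof -
  have "p \<in> (T -` {0})\<^sup>\<bottom>"
    using ker by (auto simp: orthogonal_comp_def orthogonal_def inner_commute)
  also have "(T -` {0})\<^sup>\<bottom> = range (adjoint T)"
    unfolding ker_orthogonal_comp_adjoint[OF lin]
    by (rule orthogonal_comp_self) (simp add: adjoint_linear[OF lin] linear_subspace_image)
  finally obtain q0 where q0: "p = adjoint T q0" by auto
  have "subspace (range T)" by (simp add: lin linear_subspace_image)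
  then obtain y z where yz: "q0 = y + z" "y \<in> range T" "z \<in> (range T)\<^sup>\<bottom>"
    using subspace_sum_orthogonal_comp set_plus_elim by (metis UNIV_I)
  have "T g \<bullet> y = p \<bullet> g" for g
  proof -
    have "T g \<bullet> z = 0" using yz(3) by (auto simp: orthogonal_comp_def orthogonal_def)
    then have "T g \<bullet> y = T g \<bullet> q0" by (simp add: yz(1) inner_add_right)
    also have "\<dots> = p \<bullet> g" by (simp add: q0 adjoint_works[OF lin] inner_commute)
    finally show ?thesis .
  qed
  then show ?thesis using that yz(2) by blast
qed

lemma gram_factorization_parseval_frame:
  fixes v :: "'n::finite \<Rightarrow> 'a::euclidean_space" and p :: "'k \<Rightarrow> real^'n"
  assumes fin: "finite K" and gram: "\<And>i j. v i \<bullet> v j = (\<Sum>k\<in>K. p k $ i * p k $ j)"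
  obtains B :: "'a set" and f where "finite B" "parseval_frame (K <+> B) f"
    "\<And>k i. k \<in> K \<Longrightarrow> f (Inl k) \<bullet> v i = p k $ i" "\<And>e i. e \<in> B \<Longrightarrow> f (Inr e) \<bullet> v i = 0"
proof -
  define T where "T g = (\<Sum>j\<in>UNIV. (g $ j) *\<^sub>R v j)" for g :: "real^'n"
  have lin: "linear T"
    by (rule linearI) (simp_all add: T_def scaleR_add_left sum.distrib scaleR_sum_right)
  have T_axis: "T (axis i 1) = v i" for i
  proof -
    have "T (axis i 1) = (\<Sum>j\<in>UNIV. if j = i then v j else 0)"
      unfolding T_def by (intro sum.cong) (auto simp: axis_def)
    then show ?thesis by simp
  qed
  have T_inner: "T g \<bullet> T h = (\<Sum>k\<in>K. (p k \<bullet> g) * (p k \<bullet> h))" for g h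
  proof -
    have "T g \<bullet> T h = (\<Sum>i\<in>UNIV. \<Sum>j\<in>UNIV. \<Sum>k\<in>K. (p k $ i * h $ i) * (p k $ j * g $ j))"
      unfolding T_def inner_sum_left inner_sum_right
      by (intro sum.cong refl) (simp add: gram sum_distrib_left ac_simps)
    also have "\<dots> = (\<Sum>k\<in>K. \<Sum>i\<in>UNIV. \<Sum>j\<in>UNIV. (p k $ i * h $ i) * (p k $ j * g $ j))"
      by (simp only: sum.swap[of _ UNIV K])
    also have "\<dots> = (\<Sum>k\<in>K. (p k \<bullet> h) * (p k \<bullet> g))"
      by (rule sum.cong[OF refl]) (simp only: inner_vec_def inner_real_def sum_product)
    finally show ?thesis by (simp add: mult.commute)
  qed
  have "\<exists>q. q \<in> range T \<and> (\<forall>g. T g \<bullet> q = p k \<bullet> g)" if "k \<in> K" for k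
  proof (rule exists_range_representer[OF lin])
    fix g assume "T g = 0"
    then have "(\<Sum>k\<in>K. (p k \<bullet> g)^2) = 0"
      using T_inner[of g g] by (simp add: power2_eq_square)
    then show "p k \<bullet> g = 0"
      using fin that by (simp add: sum_nonneg_eq_0_iff)
  qed blast
  then obtain q where q: "\<And>k. k \<in> K \<Longrightarrow> q k \<in> range T" "\<And>k g. k \<in> K \<Longrightarrow> T g \<bullet> q k = p k \<bullet> g"
    by metis
  obtain B where B: "finite B" "B \<subseteq> (range T)\<^sup>\<bottom>" "parseval_frame (K <+> B) (case_sum q id)"
  proof (rule parseval_frame_completion[OF _ fin q(1)])
    show "subspace (range T)" by (simp add: lin linear_subspace_image)
    show "(\<Sum>k\<in>K. (q k \<bullet> w) * (q k \<bullet> w')) = w \<bullet> w'" if "w \<in> range T" "w' \<in> range T" for w w'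
      using that by (auto simp: q(2) inner_commute T_inner intro!: sum.cong)
  qed
  moreover have "q k \<bullet> v i = p k $ i" if "k \<in> K" for k i
    using q(2)[OF that, of "axis i 1"] by (simp add: T_axis inner_commute inner_axis)
  moreover have "e \<bullet> v i = 0" if "e \<in> B" for e i
  proof -
    have "e \<in> (range T)\<^sup>\<bottom>" using B(2) that by blast
    then have "e \<bullet> T (axis i 1) = 0"
      by (simp add: orthogonal_comp_def orthogonal_def inner_commute)
    then show ?thesis by (simp add: T_axis)
  qed
  ultimately show ?thesis
    using that[of B "case_sum q id"] by simp
qed

lemma B_sep_witness_if_gram_in_cut_polytope:
  fixes v :: "'n::finite \<Rightarrow> real^'r::finite"
  assumes "gram v \<in> cut_polytope"
  shows "(\<Sum>i\<in>UNIV. (norm (v i))^2) = real CARD('n)"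
    and "\<exists>M \<in> (B_sep :: (real^('n \<times> 'r)^('n \<times> 'r)) set). stack v \<bullet> (M *v stack v) = (real CARD('n))^2"
proof -
  show "(\<Sum>i\<in>UNIV. (norm (v i))^2) = real CARD('n)"
    using cut_polytope_diagonal[OF assms] by (simp add: power2_norm_eq_inner gram_def)
  obtain K :: "nat set" and w s where K: "finite K" and ws: "\<And>k. k \<in> K \<Longrightarrow> 0 \<le> w k \<and> sign_vector (s k)"
    and w1: "sum w K = 1" and X: "gram v = (\<Sum>k\<in>K. w k *\<^sub>R outer (s k))"
    using cut_polytopeE[OF assms] by blast
  define p where "p k = sqrt (w k) *\<^sub>R s k" for k
  have "v i \<bullet> v j = (\<Sum>k\<in>K. p k $ i * p k $ j)" for i j
  proof -
    have "v i \<bullet> v j = (\<Sum>k\<in>K. w k * (s k $ i * s k $ j))"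
      using X[THEN arg_cong[of _ _ "\<lambda>X. X $ i $ j"]] by (simp add: gram_def outer_def)
    also have "\<dots> = (\<Sum>k\<in>K. p k $ i * p k $ j)"
      using ws by (intro sum.cong) (auto simp: p_def real_sqrt_mult_self mult_ac simp flip: real_sqrt_mult)
    finally show ?thesis .
  qed
  then obtain B :: "(real^'r) set" and f where B: "finite B" and frame: "parseval_frame (K <+> B) f"
    and f_Inl: "\<And>k i. k \<in> K \<Longrightarrow> f (Inl k) \<bullet> v i = p k $ i"
    and f_Inr: "\<And>e i. e \<in> B \<Longrightarrow> f (Inr e) \<bullet> v i = 0"
    using gram_factorization_parseval_frame[OF K] by blast
  define a :: "nat + real^'r \<Rightarrow> real^'n" where "a = case_sum s (\<lambda>_. \<chi> i. 1)"
  define M where "M = (\<Sum>j\<in>K <+> B. outer (kron (a j) (f j)))"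
  have "sign_vector (a j)" if "j \<in> K <+> B" for j
    using that by (auto simp: a_def ws) (simp add: sign_vector_def)
  then have "M \<in> B_sep"
    unfolding M_def using K B frame by (intro sum_outer_kron_parseval_frame_in_B_sep) auto
  moreover have "stack v \<bullet> (M *v stack v) = (real CARD('n))^2"
  proof -
    have Inl_term: "(\<Sum>i\<in>UNIV. s k $ i * (f (Inl k) \<bullet> v i)) = real CARD('n) * sqrt (w k)"
      if "k \<in> K" for k
    proof -
      have "s k $ i * (f (Inl k) \<bullet> v i) = sqrt (w k) * (s k $ i)^2" for i
        by (simp add: f_Inl[OF that] p_def power2_eq_square)
      then show ?thesis using ws[OF that] by (simp add: sign_vector_square)
    qed
    have "stack v \<bullet> (M *v stack v) = (\<Sum>j\<in>K <+> B. (\<Sum>i\<in>UNIV. a j $ i * (f j \<bullet> v i))^2)"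
      unfolding M_def by (rule quadratic_form_sum_outer_kron[where c = "\<lambda>_. 1", simplified])
    also have "\<dots> = (\<Sum>k\<in>K. (\<Sum>i\<in>UNIV. s k $ i * (f (Inl k) \<bullet> v i))^2)"
      by (simp add: sum.Plus[OF K B] a_def f_Inr)
    also have "\<dots> = (\<Sum>k\<in>K. (real CARD('n))^2 * w k)"
      using ws by (intro sum.cong) (auto simp: Inl_term power_mult_distrib)
    also have "\<dots> = (real CARD('n))^2"
      using w1 by (simp flip: sum_distrib_left)
    finally show ?thesis .
  qed
  ultimately show "\<exists>M \<in> (B_sep :: (real^('n \<times> 'r)^('n \<times> 'r)) set). stack v \<bullet> (M *v stack v) = (real CARD('n))^2"
    by blast
qed

lemma weighted_sum_squares_eq_0:
  fixes d z :: "'k \<Rightarrow> real"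
  assumes "finite K" "\<And>k. k \<in> K \<Longrightarrow> 0 \<le> d k" "(\<Sum>k\<in>K. d k * (z k)^2) = 0" "k \<in> K"
  shows "d k * z k = 0"
proof -
  have "d k * (z k)^2 = 0"
    using assms by (subst (asm) sum_nonneg_eq_0_iff) auto
  then show ?thesis by simp
qed

lemma sum_squares_deviation_from_mean:
  fixes y :: "'n::finite \<Rightarrow> real"
  defines "t \<equiv> sum y UNIV / CARD('n)"
  shows "(\<Sum>i\<in>UNIV. (y i - t)^2) = (\<Sum>i\<in>UNIV. (y i)^2) - (sum y UNIV)^2 / CARD('n)"
proof -
  have "(\<Sum>i\<in>UNIV. (y i - t)^2) = (\<Sum>i\<in>UNIV. (y i)^2) - 2 * t * sum y UNIV + CARD('n) * t^2"
    by (simp add: power2_diff sum.distrib sum_subtractf sum_distrib_left sum_distrib_right mult_ac)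
  then show ?thesis
    by (simp add: t_def field_simps power2_eq_square)
qed

lemma weighted_product_of_balanced:
  fixes d y z t :: real
  assumes "d * y = d * t" "d * z = d * t"
  shows "d * (y * z) = d * t^2"
  by (metis assms mult.assoc mult.left_commute power2_eq_square)

text \<open>With t = alpha x = beta y one has (alpha y)^2 = (alpha x)(beta y) = t^2 and
  t alpha y = alpha^2 x y, so alpha y equals t times the signs of x and y.\<close>

lemma sign_pattern:
  fixes d t \<alpha> \<beta> x y :: real
  assumes "d * (\<alpha> * x - t) = 0" "d * (\<beta> * y - t) = 0" "d * (\<alpha> * y - \<beta> * x) = 0"
  shows "d * t * (\<alpha> * y) = d * t^2 * ((if 0 \<le> x then 1 else -1) * (if 0 \<le> y then 1 else -1))"
proof (cases "d = 0 \<or> t = 0")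
  case False
  then have eqs: "\<alpha> * x = t" "\<beta> * y = t" "\<alpha> * y = \<beta> * x" "t \<noteq> 0" using assms by auto
  then have "\<alpha> \<noteq> 0" "x \<noteq> 0" "y \<noteq> 0" by auto
  have "(\<alpha> * y)^2 = (\<alpha> * x) * (\<beta> * y)"
    using eqs(3) by (simp add: power2_eq_square mult_ac)
  then have "\<bar>\<alpha> * y\<bar> = \<bar>t\<bar>"
    using eqs(1,2) by (simp add: power2_eq_iff flip: power2_eq_square) (metis abs_minus_cancel)
  then have "\<bar>t * (\<alpha> * y)\<bar> = t^2"
    by (simp add: abs_mult power2_eq_square)
  moreover have "sgn (t * (\<alpha> * y)) = sgn x * sgn y"
  proof -
    have "t * (\<alpha> * y) = \<alpha>^2 * (x * y)" using eqs(1) by (simp add: power2_eq_square mult_ac)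
    then have "sgn (t * (\<alpha> * y)) = sgn (\<alpha>^2) * (sgn x * sgn y)" by (simp only: sgn_mult)
    also have "sgn (\<alpha>^2) = 1" using \<open>\<alpha> \<noteq> 0\<close> by (intro sgn_pos) simp
    finally show ?thesis by simp
  qed
  moreover have "sgn z = (if 0 \<le> z then 1 else -1)" if "z \<noteq> 0" for z :: real
    using that by (simp add: sgn_real_def)
  ultimately have "t * (\<alpha> * y) = t^2 * ((if 0 \<le> x then 1 else -1) * (if 0 \<le> y then 1 else -1))"
    using \<open>x \<noteq> 0\<close> \<open>y \<noteq> 0\<close> mult_sgn_abs[of "t * (\<alpha> * y)"] by (simp add: mult.commute)
  then show ?thesis by (simp add: mult.assoc)
qed auto

text \<open>The hypotheses of the converse direction for M = sum_k d_k (a_k a_k^T) (x) (b_k b_k^T);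
  identity_blocks is block M i i = I read as a bilinear form.\<close>

locale tight_witness =
  fixes v :: "'n::finite \<Rightarrow> real^'r::finite" and K :: "'k set" and d :: "'k \<Rightarrow> real"
    and a :: "'k \<Rightarrow> real^'n" and b :: "'k \<Rightarrow> real^'r"
  assumes finite_K: "finite K" and weights_nonneg: "\<And>k. k \<in> K \<Longrightarrow> 0 \<le> d k"
    and identity_blocks: "\<And>i u w. (\<Sum>k\<in>K. d k * ((a k $ i)^2 * ((b k \<bullet> u) * (b k \<bullet> w)))) = u \<bullet> w"
    and sum_norms: "(\<Sum>i\<in>UNIV. (norm (v i))^2) = real CARD('n)"
    and quadratic_form: "(\<Sum>k\<in>K. d k * (\<Sum>i\<in>UNIV. a k $ i * (b k \<bullet> v i))^2) = (real CARD('n))^2"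
begin

definition coeff :: "'k \<Rightarrow> 'n \<Rightarrow> real" where
  "coeff k i = a k $ i * (b k \<bullet> v i)"

definition mean :: "'k \<Rightarrow> real" where
  "mean k = sum (coeff k) UNIV / CARD('n)"

lemma inner_eq_weighted_sum: "v i \<bullet> v j = (\<Sum>k\<in>K. d k * (coeff k i * (a k $ i * (b k \<bullet> v j))))"
  using identity_blocks[of i "v i" "v j"] by (simp add: coeff_def power2_eq_square mult_ac)

lemma weighted_sum_coeff_squares: "(\<Sum>k\<in>K. d k * (\<Sum>i\<in>UNIV. (coeff k i)^2)) = CARD('n)"
proof -
  have "real CARD('n) = (\<Sum>i\<in>UNIV. v i \<bullet> v i)"
    using sum_norms by (simp add: power2_norm_eq_inner)
  also have "\<dots> = (\<Sum>i\<in>UNIV. \<Sum>k\<in>K. d k * (coeff k i)^2)"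
    by (simp add: inner_eq_weighted_sum coeff_def power2_eq_square)
  also have "\<dots> = (\<Sum>k\<in>K. d k * (\<Sum>i\<in>UNIV. (coeff k i)^2))"
    by (subst sum.swap) (simp add: sum_distrib_left)
  finally show ?thesis by simp
qed

text \<open>Equality in Cauchy-Schwarz: the weighted variances of the coeff k add up to N - N^2/N = 0.\<close>

lemma coeff_balanced: "k \<in> K \<Longrightarrow> d k * coeff k i = d k * mean k"
proof -
  have "(\<Sum>k\<in>K. d k * (\<Sum>i\<in>UNIV. (coeff k i - mean k)^2))
      = (\<Sum>k\<in>K. d k * (\<Sum>i\<in>UNIV. (coeff k i)^2)) - (\<Sum>k\<in>K. d k * (sum (coeff k) UNIV)^2) / CARD('n)"
    unfolding mean_def sum_squares_deviation_from_mean
    by (simp add: right_diff_distrib sum_subtractf sum_divide_distrib)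
  also have "\<dots> = 0"
    using weighted_sum_coeff_squares quadratic_form by (simp add: coeff_def power2_eq_square)
  finally have "d k * (\<Sum>i\<in>UNIV. (coeff k i - mean k)^2) = 0" if "k \<in> K"
    using that finite_K weights_nonneg by (subst (asm) sum_nonneg_eq_0_iff) (auto intro!: sum_nonneg mult_nonneg_nonneg)
  then have "d k = 0 \<or> (\<forall>i. coeff k i = mean k)" if "k \<in> K"
    using that by (simp add: sum_nonneg_eq_0_iff)
  then show "k \<in> K \<Longrightarrow> d k * coeff k i = d k * mean k"
    by auto
qed

lemma mean_weights_sum: "(\<Sum>k\<in>K. d k * (mean k)^2) = 1"
proof -
  have "(\<Sum>k\<in>K. d k * (mean k)^2) = (\<Sum>k\<in>K. d k * (sum (coeff k) UNIV)^2) / (CARD('n))^2"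
    unfolding mean_def power_divide by (simp add: sum_divide_distrib)
  then show ?thesis
    using quadratic_form by (simp add: coeff_def)
qed

lemma unit_norm: "v i \<bullet> v i = 1"
proof -
  have "v i \<bullet> v i = (\<Sum>k\<in>K. d k * (coeff k i * coeff k i))"
    by (simp add: inner_eq_weighted_sum coeff_def)
  also have "\<dots> = (\<Sum>k\<in>K. d k * (mean k)^2)"
    by (auto intro!: sum.cong weighted_product_of_balanced coeff_balanced)
  finally show ?thesis using mean_weights_sum by simp
qed

lemma coeff_exchange: "k \<in> K \<Longrightarrow> d k * (a k $ i * (b k \<bullet> v j) - a k $ j * (b k \<bullet> v i)) = 0"
proof (rule weighted_sum_squares_eq_0[OF finite_K weights_nonneg])
  define p where "p k = a k $ i * (b k \<bullet> v j)" for k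
  define q where "q k = a k $ j * (b k \<bullet> v i)" for k
  have p: "(\<Sum>k\<in>K. d k * (p k)^2) = 1"
    using identity_blocks[of i "v j" "v j"] unit_norm[of j]
    by (simp add: p_def power_mult_distrib power2_eq_square mult_ac)
  have q: "(\<Sum>k\<in>K. d k * (q k)^2) = 1"
    using identity_blocks[of j "v i" "v i"] unit_norm[of i]
    by (simp add: q_def power_mult_distrib power2_eq_square mult_ac)
  have pq: "(\<Sum>k\<in>K. d k * (p k * q k)) = 1"
  proof -
    have "(\<Sum>k\<in>K. d k * (p k * q k)) = (\<Sum>k\<in>K. d k * (coeff k i * coeff k j))"
      by (simp add: p_def q_def coeff_def mult_ac)
    also have "\<dots> = (\<Sum>k\<in>K. d k * (mean k)^2)"
      by (auto intro!: sum.cong weighted_product_of_balanced coeff_balanced)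
    finally show ?thesis using mean_weights_sum by simp
  qed
  have "(\<Sum>k\<in>K. d k * (p k - q k)^2)
      = (\<Sum>k\<in>K. d k * (p k)^2) + (\<Sum>k\<in>K. d k * (q k)^2) - 2 * (\<Sum>k\<in>K. d k * (p k * q k))"
    by (simp add: power2_diff algebra_simps sum.distrib sum_subtractf sum_distrib_left)
  then show "(\<Sum>k\<in>K. d k * (a k $ i * (b k \<bullet> v j) - a k $ j * (b k \<bullet> v i))^2) = 0"
    using p q pq by (simp add: p_def q_def)
qed

lemma gram_sign_decomposition:
  "gram v = (\<Sum>k\<in>K. (d k * (mean k)^2) *\<^sub>R outer (\<chi> i. if 0 \<le> b k \<bullet> v i then 1 else -1))"
proof -
  have "v i \<bullet> v j = (\<Sum>k\<in>K. d k * (mean k)^2 *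
      ((if 0 \<le> b k \<bullet> v i then 1 else -1) * (if 0 \<le> b k \<bullet> v j then 1 else -1)))" for i j
  proof -
    have "v i \<bullet> v j = (\<Sum>k\<in>K. d k * mean k * (a k $ i * (b k \<bullet> v j)))"
      unfolding inner_eq_weighted_sum using coeff_balanced
      by (intro sum.cong) (auto simp flip: mult.assoc)
    also have "\<dots> = (\<Sum>k\<in>K. d k * (mean k)^2 *
        ((if 0 \<le> b k \<bullet> v i then 1 else -1) * (if 0 \<le> b k \<bullet> v j then 1 else -1)))"
      using coeff_balanced[of _ i] coeff_balanced[of _ j] coeff_exchange[of _ i j]
      by (intro sum.cong refl sign_pattern) (simp_all add: coeff_def right_diff_distrib)
    finally show ?thesis .
  qed
  then show ?thesis by (simp add: vec_eq_iff gram_def outer_def)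
qed

lemma gram_in_cut_polytope: "gram v \<in> cut_polytope"
  unfolding gram_sign_decomposition
proof (rule sum_outer_sign_vectors_in_cut_polytope[OF finite_K])
  show "0 \<le> d k * (mean k)^2 \<and> sign_vector (\<chi> i. if 0 \<le> b k \<bullet> v i then 1 else -1)" if "k \<in> K" for k
    using weights_nonneg[OF that] by (simp add: sign_vector_def)
qed (rule mean_weights_sum)

end

lemma gram_in_cut_polytope_if_B_sep_witness:
  fixes v :: "'n::finite \<Rightarrow> real^'r::finite" and M :: "real^('n \<times> 'r)^('n \<times> 'r)"
  assumes norms: "(\<Sum>i\<in>UNIV. (norm (v i))^2) = real CARD('n)" and M: "M \<in> B_sep"
    and attained: "stack v \<bullet> (M *v stack v) = (real CARD('n))^2"
  shows "gram v \<in> cut_polytope"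
proof -
  obtain m :: nat and c a b where c: "\<And>k. k < m \<Longrightarrow> 0 \<le> c k" and diag: "\<And>i. block M i i = mat 1"
    and M_eq: "M = (\<Sum>k<m. c k *\<^sub>R outer (kron (a k) (b k)))"
    using B_sepE[OF M] by blast
  interpret tight_witness v "{..<m}" c a b
  proof
    show "(\<Sum>k<m. c k * ((a k $ i)^2 * ((b k \<bullet> u) * (b k \<bullet> w)))) = u \<bullet> w" for i u w
    proof -
      have "u \<bullet> w = u \<bullet> (block M i i *v w)" using diag by simp
      then show ?thesis
        unfolding M_eq block_sum_outer_kron inner_sum_outer_mult by (simp add: power2_eq_square mult_ac)
    qed
    show "(\<Sum>k<m. c k * (\<Sum>i\<in>UNIV. a k $ i * (b k \<bullet> v i))^2) = (real CARD('n))^2"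
      using attained unfolding M_eq quadratic_form_sum_outer_kron .
  qed (use c norms in auto)
  show ?thesis by (rule gram_in_cut_polytope)
qed

theorem proposition10:
  fixes v :: "'n::finite \<Rightarrow> real^'r::finite"
  shows "gram v \<in> cut_polytope \<longleftrightarrow>
    ((\<Sum>i\<in>UNIV. (norm (v i))^2) = real CARD('n) \<and>
     (\<exists>M \<in> (B_sep :: (real^('n \<times> 'r)^('n \<times> 'r)) set).
        stack v \<bullet> (M *v stack v) = (real CARD('n))^2))"
  using B_sep_witness_if_gram_in_cut_polytope gram_in_cut_polytope_if_B_sep_witness by blast

end
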